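(* Define integers $a(n)$ by $\sum_{n\ge0}a(n)q^n=\frac{f_1f_6}{f_2^2f_3}$. Then for all $n\ge 0$, $a(2n)\equiv 1\pmod 2$ if $n=0$ or $n$ is a perfect square not divisible by $3$, and $a(2n)\equiv 0\pmod 2$ otherwise.
   Context: For a positive integer $r$, $f_r=\prod_{k\geq1}(1-q^{rk})$, a formal power series in $q$. *)

theory Defs
  imports "HOL-Computational_Algebra.Formal_Power_Series"
begin

text \<open>f_r = prod_{k>=1} (1 - q^(r k)) as a formal power series over the integers.
  The coefficient of q^n of the infinite product is the coefficient of q^n of the
  finite partial product over k = 1..n (factors with k > n only affect degrees > n
  when r >= 1).\<close>
definition eta_f :: "nat \<Rightarrow> int fps" where
  "eta_f r = Abs_fps (\<lambda>n. fps_nth (\<Prod>k\<in>{1..n}. (1 - fps_X ^ (r * k))) n)"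

text \<open>The series sum a(n) q^n = f_1 f_6 / (f_2^2 f_3): the unique integer power series A
  with A * (f_2^2 f_3) = f_1 f_6 (f_2^2 f_3 has constant term 1, so it is a unit).\<close>
definition gen_A :: "int fps" where
  "gen_A = (THE A. A * (eta_f 2 ^ 2 * eta_f 3) = eta_f 1 * eta_f 6)"

definition a_coeff :: "nat \<Rightarrow> int" where
  "a_coeff n = fps_nth gen_A n"

end

theory Submission
  imports
    Defs
    "HOL-Library.Z2"
    "HOL-Library.Groups_Big_Fun"
    "HOL-Library.Disjoint_Sets"
    "HOL-Computational_Algebra.Primes"
begin

unbundle fps_syntax

text \<open>Everything is reduced modulo 2, where the signs in the eta products disappear and squaring
  is additive. Write \<open>P\<^sub>r\<close> for \<open>f\<^sub>r\<close> modulo 2 and \<open>A\<close> for the generating function modulo 2; then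
  \<open>P\<^sub>2\<^sub>r = P\<^sub>r\<^sup>2\<close> and \<open>A P\<^sub>1\<^sup>3 = P\<^sub>3\<close>. Jacobi's triple product identity, proved through its finite
  form with Gaussian binomial coefficients, gives Euler's pentagonal theorem for \<open>P\<^sub>d\<close> and Jacobi's
  identity \<open>P\<^sub>d\<^sup>3 = \<psi>(q\<^sup>d)\<close>. Together with \<open>\<psi>(q) \<psi>(q\<^sup>3) = \<psi>(q\<^sup>4) + q \<psi>(q\<^sup>1\<^sup>2)\<close>, obtained by splitting
  the pairs of summation indices into residue classes modulo 4 and cancelling orbits of involutions,
  this yields \<open>A\<^sup>3 = 1 + q (A P\<^sub>3\<^sup>2)\<^sup>4\<close>. Hence the even part \<open>Y\<close> of \<open>A\<close> is \<open>1/A\<close> and satisfies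
  \<open>Y + Y\<^sup>4 = q P\<^sub>3\<^sup>8 = q P\<^sub>2\<^sub>4\<close>. By the pentagonal theorem \<open>q P\<^sub>2\<^sub>4 = \<Sum>\<^sub>k q\<^sup>(\<^sup>6\<^sup>k\<^sup>+\<^sup>1\<^sup>)\<^sup>2\<close>, and the
  indicator series of \<open>0\<close> and the squares prime to 3 solves the same equation; as a solution of
  \<open>Y + Y\<^sup>4 = H\<close> is determined by its constant term, the two series coincide.\<close>

section \<open>Power series over the two-element field\<close>

lemma bit_add_self [simp]: "(x::bit) + x = 0"
  by (cases x) simp_all

lemma fps_bit_add_self [simp]: "(F::bit fps) + F = 0"
  by (rule fps_ext) (simp only: fps_add_nth bit_add_self fps_zero_nth)

lemma fps_bit_add_cancel_left [simp]: "(F::bit fps) + (F + G) = G"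
  by (simp flip: add.assoc)

lemma fps_bit_two [simp]: "(2::bit fps) = 0"
  by (metis fps_bit_add_self one_add_one)

lemma of_int_bit: "(of_int z :: bit) = of_bool (odd z)"
  by (cases "even z") (auto elim!: evenE oddE)

lemma sum_bit_involution:
  fixes f :: "'a \<Rightarrow> bit"
  assumes "finite S"
    and "\<And>x. x \<in> S \<Longrightarrow> \<sigma> x \<in> S" "\<And>x. x \<in> S \<Longrightarrow> \<sigma> (\<sigma> x) = x"
    and "\<And>x. x \<in> S \<Longrightarrow> f (\<sigma> x) = f x"
  shows "sum f S = sum f {x\<in>S. \<sigma> x = x}"
proof -
  have "sum f {x\<in>S. \<sigma> x \<noteq> x} = 0"
    by (rule sum_involution_eq_0[where h = \<sigma>]) (use assms in auto)
  moreover have "sum f S = sum f {x\<in>S. \<sigma> x = x} + sum f {x\<in>S. \<sigma> x \<noteq> x}"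
    using assms(1) by (subst sum.union_disjoint[symmetric]) (auto intro: sum.cong)
  ultimately show ?thesis
    by simp
qed

lemma fps_bit_square_nth: "((F::bit fps)^2) $ n = (if even n then F $ (n div 2) else 0)"
proof -
  have "(F^2) $ n = (\<Sum>i\<in>{0..n}. F $ i * F $ (n - i))"
    by (simp add: power2_eq_square fps_mult_nth)
  also have "\<dots> = (\<Sum>i\<in>{i\<in>{0..n}. n - i = i}. F $ i * F $ (n - i))"
    by (rule sum_bit_involution[where \<sigma> = "\<lambda>i. n - i"]) (auto simp: mult.commute)
  finally have sq: "(F^2) $ n = (\<Sum>i\<in>{i\<in>{0..n}. n - i = i}. F $ i * F $ (n - i))" .
  show ?thesis
  proof (cases "even n")
    case True
    then have "{i\<in>{0..n}. n - i = i} = {n div 2}" and "n - n div 2 = n div 2"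
      by auto
    then show ?thesis
      using sq True by simp
  next
    case False
    then have "{i\<in>{0..n}. n - i = i} = {}"
      by auto presburger
    then show ?thesis
      using sq False by (simp only: sum.empty if_False)
  qed
qed

lemma fps_bit_power4_nth: "((F::bit fps)^4) $ n = (if 4 dvd n then F $ (n div 4) else 0)"
proof -
  have "(F^4) $ n = ((F^2)^2) $ n"
    by (simp flip: power_mult)
  moreover have "4 dvd n \<longleftrightarrow> even n \<and> even (n div 2)" and "n div 2 div 2 = n div 4"
    by presburger (simp add: div_mult2_eq)
  ultimately show ?thesis
    by (simp only: fps_bit_square_nth) auto
qed

lemma fps_bit_square_add: "((F::bit fps) + G)^2 = F^2 + G^2"
  by (simp add: power2_sum)

lemma fps_bit_power4_add: "((F::bit fps) + G)^4 = F^4 + G^4"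
proof -
  have "(F + G)^4 = ((F + G)^2)^2"
    by (simp flip: power_mult)
  then show ?thesis
    by (simp add: fps_bit_square_add flip: power_mult)
qed

text \<open>The difference \<open>D\<close> of two solutions satisfies \<open>D = D\<^sup>4\<close>, which propagates \<open>D $ 0 = 0\<close>
  from index \<open>n div 4\<close> to index \<open>n\<close>.\<close>
lemma fps_bit_add_power4_unique:
  fixes Y G :: "bit fps"
  assumes "Y + Y^4 = G + G^4" "Y $ 0 = G $ 0"
  shows "Y = G"
proof -
  define D where "D = Y + G"
  have "D + D^4 = (Y + Y^4) + (G + G^4)"
    by (simp add: D_def fps_bit_power4_add ac_simps)
  then have D4: "D^4 = D"
    using assms(1) by (metis add.assoc add_0_right fps_bit_add_self)
  have "D $ n = 0" for n
  proof (induction n rule: less_induct)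
    case (less n)
    show ?case
    proof (cases "n = 0")
      case True
      then show ?thesis
        using assms(2) by (simp add: D_def)
    next
      case False
      then have "D $ n = (if 4 dvd n then D $ (n div 4) else 0)"
        by (metis D4 fps_bit_power4_nth)
      then show ?thesis
        using less.IH[of "n div 4"] False by auto
    qed
  qed
  then have "D = 0"
    by (simp add: fps_ext)
  then show ?thesis
    by (metis D_def add.assoc add_0_left fps_bit_add_self)
qed

section \<open>Agreement of power series up to a given degree\<close>

definition fps_eq_upto :: "nat \<Rightarrow> 'a::zero fps \<Rightarrow> 'a fps \<Rightarrow> bool" where
  "fps_eq_upto n F G \<longleftrightarrow> (\<forall>i\<le>n. F $ i = G $ i)"

lemma fps_eq_upto_refl [simp]: "fps_eq_upto n F F"
  by (simp add: fps_eq_upto_def)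

lemma fps_eq_upto_sym: "fps_eq_upto n F G \<Longrightarrow> fps_eq_upto n G F"
  by (simp add: fps_eq_upto_def)

lemma fps_eq_upto_trans [trans]: "fps_eq_upto n F G \<Longrightarrow> fps_eq_upto n G H \<Longrightarrow> fps_eq_upto n F H"
  by (simp add: fps_eq_upto_def)

lemma fps_eq_upto_add:
  "fps_eq_upto n F G \<Longrightarrow> fps_eq_upto n F' G' \<Longrightarrow> fps_eq_upto n (F + F') (G + G' :: 'a::monoid_add fps)"
  by (simp add: fps_eq_upto_def)

lemma fps_eq_upto_mult:
  fixes F G F' G' :: "'a::comm_semiring_1 fps"
  shows "fps_eq_upto n F G \<Longrightarrow> fps_eq_upto n F' G' \<Longrightarrow> fps_eq_upto n (F * F') (G * G')"
  unfolding fps_eq_upto_def fps_mult_nth by (auto intro!: sum.cong)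

lemma fps_eq_upto_power:
  fixes F G :: "'a::comm_semiring_1 fps"
  shows "fps_eq_upto n F G \<Longrightarrow> fps_eq_upto n (F ^ k) (G ^ k)"
  by (induction k) (auto intro: fps_eq_upto_mult)

lemma fps_eq_upto_sum:
  fixes f g :: "'b \<Rightarrow> 'a::comm_monoid_add fps"
  shows "finite K \<Longrightarrow> (\<And>k. k \<in> K \<Longrightarrow> fps_eq_upto n (f k) (g k)) \<Longrightarrow>
    fps_eq_upto n (sum f K) (sum g K)"
  by (induction K rule: finite_induct) (auto intro: fps_eq_upto_add)

lemma fps_eq_upto_prod:
  fixes f g :: "'b \<Rightarrow> 'a::comm_semiring_1 fps"
  shows "finite K \<Longrightarrow> (\<And>k. k \<in> K \<Longrightarrow> fps_eq_upto n (f k) (g k)) \<Longrightarrow>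
    fps_eq_upto n (prod f K) (prod g K)"
  by (induction K rule: finite_induct) (auto intro: fps_eq_upto_mult)

lemma fps_eq_upto_cancel:
  fixes F G H :: "'a::field fps"
  assumes "fps_eq_upto n (F * H) (G * H)" "H $ 0 \<noteq> 0"
  shows "fps_eq_upto n F G"
proof -
  have "fps_eq_upto n (F * H * inverse H) (G * H * inverse H)"
    using assms(1) by (rule fps_eq_upto_mult) simp
  moreover have "H * inverse H = 1"
    using assms(2) by (simp add: inverse_mult_eq_1')
  ultimately show ?thesis
    by (simp add: mult.assoc)
qed

lemma fps_eq_upto_X_power_mult_0:
  "n < m \<Longrightarrow> fps_eq_upto n (fps_X ^ m * F) (0::'a::comm_semiring_1 fps)"
  by (simp add: fps_eq_upto_def fps_X_power_mult_nth)

lemma fps_eq_if_eq_upto: "(\<And>n. fps_eq_upto n F G) \<Longrightarrow> F = G"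
  by (rule fps_ext) (auto simp: fps_eq_upto_def)

section \<open>The eta products modulo 2\<close>

definition fps_mod2 :: "int fps \<Rightarrow> bit fps" where
  "fps_mod2 F = Abs_fps (\<lambda>n. of_int (F $ n))"

lemma fps_mod2_nth [simp]: "fps_mod2 F $ n = of_int (F $ n)"
  by (simp add: fps_mod2_def)

lemma fps_mod2_one [simp]: "fps_mod2 1 = 1"
  by (rule fps_ext) simp

lemma fps_mod2_mult: "fps_mod2 (F * G) = fps_mod2 F * fps_mod2 G"
  by (rule fps_ext) (simp add: fps_mult_nth)

lemma fps_mod2_power: "fps_mod2 (F ^ k) = fps_mod2 F ^ k"
  by (induction k) (simp_all add: fps_mod2_mult)

lemma fps_mod2_prod: "finite K \<Longrightarrow> fps_mod2 (prod f K) = (\<Prod>k\<in>K. fps_mod2 (f k))"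
  by (induction K rule: finite_induct) (simp_all add: fps_mod2_mult)

lemma fps_mod2_one_minus_X_power: "fps_mod2 (1 - fps_X ^ m) = 1 + fps_X ^ m"
  by (rule fps_ext) (simp add: of_int_bit)

definition eta_part :: "nat \<Rightarrow> nat \<Rightarrow> bit fps" where
  "eta_part r N = (\<Prod>k\<in>{1..N}. 1 + fps_X ^ (r * k))"

definition eta_mod2 :: "nat \<Rightarrow> bit fps" where
  "eta_mod2 r = fps_mod2 (eta_f r)"

lemma eta_part_0 [simp]: "eta_part r 0 = 1"
  by (simp add: eta_part_def)

lemma eta_part_Suc: "eta_part r (Suc N) = eta_part r N * (1 + fps_X ^ (r * Suc N))"
  unfolding eta_part_def by (simp add: atLeastAtMostSuc_conv mult.commute)

lemma eta_part_nth_0 [simp]: "r > 0 \<Longrightarrow> eta_part r N $ 0 = 1"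
  by (induction N) (simp_all add: eta_part_Suc)

lemma eta_part_neq_0: "r > 0 \<Longrightarrow> eta_part r N \<noteq> 0"
  by (metis eta_part_nth_0 fps_zero_nth zero_neq_one)

lemma eta_part_eq_upto:
  assumes "r > 0" "n \<le> N"
  shows "fps_eq_upto n (eta_part r N) (eta_part r n)"
proof -
  have "eta_part r N = eta_part r n * (\<Prod>k\<in>{n<..N}. 1 + fps_X ^ (r * k))"
    unfolding eta_part_def using assms(2) by (subst prod.union_disjoint[symmetric]) (auto intro: prod.cong)
  moreover have "fps_eq_upto n (\<Prod>k\<in>{n<..N}. 1 + fps_X ^ (r * k)) (\<Prod>k\<in>{n<..N}. 1)"
  proof (rule fps_eq_upto_prod)
    fix k assume "k \<in> {n<..N}"
    then have "n < r * k"
      using assms(1) by (simp add: less_le_trans[of n k] mult_le_mono1[of 1 r k, simplified])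
    then show "fps_eq_upto n (1 + fps_X ^ (r * k)) 1"
      by (simp add: fps_eq_upto_def)
  qed simp
  ultimately show ?thesis
    using fps_eq_upto_mult[OF fps_eq_upto_refl[of n "eta_part r n"]] by fastforce
qed

lemma eta_mod2_eq_upto:
  assumes "r > 0" "n \<le> N"
  shows "fps_eq_upto n (eta_mod2 r) (eta_part r N)"
  unfolding fps_eq_upto_def
proof (intro allI impI)
  fix i assume "i \<le> n"
  have "eta_mod2 r $ i = fps_mod2 (\<Prod>k\<in>{1..i}. 1 - fps_X ^ (r * k)) $ i"
    by (simp add: eta_mod2_def eta_f_def)
  also have "\<dots> = eta_part r i $ i"
    by (simp add: fps_mod2_prod fps_mod2_one_minus_X_power eta_part_def)
  also have "\<dots> = eta_part r N $ i"
    using eta_part_eq_upto[OF assms(1), of i N] \<open>i \<le> n\<close> assms(2) by (simp add: fps_eq_upto_def)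
  finally show "eta_mod2 r $ i = eta_part r N $ i" .
qed

lemma eta_mod2_nth_0 [simp]: "r > 0 \<Longrightarrow> eta_mod2 r $ 0 = 1"
  using eta_mod2_eq_upto[of r 0 0] by (simp add: fps_eq_upto_def)

lemma eta_part_double: "eta_part (2 * r) N = eta_part r N ^ 2"
proof -
  have "(1 + fps_X ^ (r * k))^2 = (1 + fps_X ^ (2 * r * k) :: bit fps)" for k
    by (simp add: fps_bit_square_add mult.commute mult.left_commute flip: power_mult)
  then show ?thesis
    by (simp add: eta_part_def prod_power_distrib)
qed

lemma eta_mod2_double: "r > 0 \<Longrightarrow> eta_mod2 (2 * r) = eta_mod2 r ^ 2"
proof (rule fps_eq_if_eq_upto)
  fix n assume r: "r > 0"
  have "fps_eq_upto n (eta_mod2 (2 * r)) (eta_part (2 * r) n)"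
    using r by (intro eta_mod2_eq_upto) auto
  also have "fps_eq_upto n (eta_part (2 * r) n) (eta_mod2 r ^ 2)"
    unfolding eta_part_double by (intro fps_eq_upto_power fps_eq_upto_sym[OF eta_mod2_eq_upto]) (use r in auto)
  finally show "fps_eq_upto n (eta_mod2 (2 * r)) (eta_mod2 r ^ 2)" .
qed

lemma eta_mod2_power2_mult: "r > 0 \<Longrightarrow> eta_mod2 (2 ^ k * r) = eta_mod2 r ^ (2 ^ k)"
proof (induction k)
  case (Suc k)
  have "eta_mod2 (2 ^ Suc k * r) = eta_mod2 (2 ^ k * r) ^ 2"
    using Suc.prems by (simp add: mult.assoc eta_mod2_double)
  also have "\<dots> = (eta_mod2 r ^ 2 ^ k) ^ 2"
    using Suc by simp
  also have "\<dots> = eta_mod2 r ^ 2 ^ Suc k"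
    by (simp only: power_Suc2 power_mult)
  finally show ?case .
qed simp

section \<open>Gaussian binomial coefficients modulo 2\<close>

text \<open>\<open>gauss_binom c n k\<close> is the Gaussian binomial coefficient \<open>[n choose k]\<close> in the variable
  \<open>q\<^sup>c\<close>, reduced modulo 2.\<close>
fun gauss_binom :: "nat \<Rightarrow> nat \<Rightarrow> nat \<Rightarrow> bit fps" where
  "gauss_binom c n 0 = 1"
| "gauss_binom c 0 (Suc k) = 0"
| "gauss_binom c (Suc n) (Suc k) = gauss_binom c n k + fps_X ^ (c * Suc k) * gauss_binom c n (Suc k)"

lemma gauss_binom_eq_0: "n < k \<Longrightarrow> gauss_binom c n k = 0"
  by (induction c n k rule: gauss_binom.induct) auto

lemma mult_Suc_add_mult_diff: "k \<le> n \<Longrightarrow> c * Suc k + c * (n - k) = c * Suc n"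
  by (metis Suc_diff_le add_Suc add_mult_distrib2 le_add_diff_inverse)

lemma gauss_binom_mult_eta_part:
  "k \<le> n \<Longrightarrow> gauss_binom c n k * eta_part c k * eta_part c (n - k) = eta_part c n"
proof (induction n arbitrary: k)
  case (Suc n)
  show ?case
  proof (cases k)
    case (Suc k')
    with Suc.prems have "k' \<le> n"
      by simp
    have first: "gauss_binom c n k' * eta_part c (Suc k') * eta_part c (n - k')
        = eta_part c n * (1 + fps_X ^ (c * Suc k'))"
    proof -
      have "gauss_binom c n k' * eta_part c (Suc k') * eta_part c (n - k')
          = (gauss_binom c n k' * eta_part c k' * eta_part c (n - k')) * (1 + fps_X ^ (c * Suc k'))"
        by (simp only: eta_part_Suc mult_ac)
      then show ?thesis
        by (simp only: Suc.IH[OF \<open>k' \<le> n\<close>])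
    qed
    have second: "fps_X ^ (c * Suc k') * gauss_binom c n (Suc k') * eta_part c (Suc k') * eta_part c (n - k')
        = eta_part c n * (fps_X ^ (c * Suc k') + fps_X ^ (c * Suc n))"
    proof (cases "k' = n")
      case False
      with \<open>k' \<le> n\<close> have "Suc k' \<le> n" and "n - k' = Suc (n - Suc k')"
        by auto
      then have "fps_X ^ (c * Suc k') * gauss_binom c n (Suc k') * eta_part c (Suc k') * eta_part c (n - k')
          = fps_X ^ (c * Suc k') * (gauss_binom c n (Suc k') * eta_part c (Suc k') * eta_part c (n - Suc k'))
            * (1 + fps_X ^ (c * (n - k')))"
        by (simp only: eta_part_Suc mult_ac)
      also have "\<dots> = fps_X ^ (c * Suc k') * eta_part c n * (1 + fps_X ^ (c * (n - k')))"
        by (simp only: Suc.IH[OF \<open>Suc k' \<le> n\<close>])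
      also have "\<dots> = eta_part c n * (fps_X ^ (c * Suc k') + fps_X ^ (c * Suc k' + c * (n - k')))"
        by (simp only: distrib_left power_add mult_1_right mult_1_left mult_ac)
      finally show ?thesis
        by (simp only: mult_Suc_add_mult_diff[OF \<open>k' \<le> n\<close>])
    qed (simp add: gauss_binom_eq_0)
    have "gauss_binom c (Suc n) k * eta_part c k * eta_part c (Suc n - k)
        = eta_part c n * (1 + fps_X ^ (c * Suc k')) + eta_part c n * (fps_X ^ (c * Suc k') + fps_X ^ (c * Suc n))"
      unfolding Suc first [symmetric] second [symmetric] by (simp add: algebra_simps)
    also have "\<dots> = eta_part c (Suc n)"
      by (simp add: eta_part_Suc distrib_left add.assoc)
    finally show ?thesis .
  qed simp
qed simp

lemma gauss_binom_Suc_Suc':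
  assumes "c > 0"
  shows "gauss_binom c (Suc n) (Suc k) = fps_X ^ (c * (n - k)) * gauss_binom c n k + gauss_binom c n (Suc k)"
proof (cases "k \<le> n")
  case True
  define W where "W = eta_part c (Suc k) * eta_part c (n - k)"
  have "gauss_binom c (Suc n) (Suc k) * W = eta_part c (Suc n)"
    using gauss_binom_mult_eta_part[of "Suc k" "Suc n" c] True by (simp add: W_def mult.assoc)
  also have "\<dots> = (fps_X ^ (c * (n - k)) * gauss_binom c n k + gauss_binom c n (Suc k)) * W"
  proof -
    have "fps_X ^ (c * (n - k)) * gauss_binom c n k * W
        = fps_X ^ (c * (n - k)) * (gauss_binom c n k * eta_part c k * eta_part c (n - k))
          * (1 + fps_X ^ (c * Suc k))"
      by (simp only: W_def eta_part_Suc mult_ac)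
    also have "\<dots> = fps_X ^ (c * (n - k)) * eta_part c n * (1 + fps_X ^ (c * Suc k))"
      by (simp only: gauss_binom_mult_eta_part[OF True])
    also have "\<dots> = eta_part c n * (fps_X ^ (c * (n - k)) + fps_X ^ (c * Suc k + c * (n - k)))"
      by (simp only: distrib_left power_add mult_1_right mult_1_left mult_ac)
    finally have first: "fps_X ^ (c * (n - k)) * gauss_binom c n k * W
        = eta_part c n * (fps_X ^ (c * (n - k)) + fps_X ^ (c * Suc n))"
      by (simp only: mult_Suc_add_mult_diff[OF True])
    have second: "gauss_binom c n (Suc k) * W = eta_part c n * (1 + fps_X ^ (c * (n - k)))"
    proof (cases "k = n")
      case False
      with True have "Suc k \<le> n" and "n - k = Suc (n - Suc k)"
        by auto
      then have "gauss_binom c n (Suc k) * W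
          = (gauss_binom c n (Suc k) * eta_part c (Suc k) * eta_part c (n - Suc k)) * (1 + fps_X ^ (c * (n - k)))"
        by (simp only: W_def eta_part_Suc mult_ac)
      then show ?thesis
        by (simp only: gauss_binom_mult_eta_part[OF \<open>Suc k \<le> n\<close>])
    qed (simp add: gauss_binom_eq_0)
    show ?thesis
      unfolding distrib_right first second by (simp add: eta_part_Suc distrib_left add.assoc)
  qed
  finally show ?thesis
    using assms by (simp add: W_def eta_part_neq_0)
qed (simp add: gauss_binom_eq_0)

definition gauss_binom_int :: "nat \<Rightarrow> nat \<Rightarrow> int \<Rightarrow> bit fps" where
  "gauss_binom_int c n j = (if j < 0 then 0 else gauss_binom c n (nat j))"

lemma gauss_binom_int_eq_0: "j < 0 \<or> int n < j \<Longrightarrow> gauss_binom_int c n j = 0"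
  by (auto simp: gauss_binom_int_def gauss_binom_eq_0)

text \<open>Two steps of the Pascal recursion, one with each of the two rules.\<close>
lemma gauss_binom_int_add2:
  assumes "c > 0"
  shows "gauss_binom_int c (n + 2) (j + 1) = (1 + fps_X ^ (c * (n + 1))) * gauss_binom_int c n j
     + fps_X ^ (c * nat (int n + 1 - j)) * gauss_binom_int c n (j - 1)
     + fps_X ^ (c * nat (j + 1)) * gauss_binom_int c n (j + 1)"
proof (cases "j < 0")
  case False
  then obtain i where j: "j = int i"
    by (metis nonneg_int_cases not_less)
  have shift: "fps_X ^ (c * Suc i) * (fps_X ^ (c * (n - i)) * gauss_binom c n i)
      = fps_X ^ (c * (n + 1)) * gauss_binom c n i"
  proof (cases "i \<le> n")
    case True
    then have "c * Suc i + c * (n - i) = c * (n + 1)"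
      using mult_Suc_add_mult_diff[OF True, of c] by simp
    then show ?thesis
      by (simp flip: power_add mult.assoc)
  qed (simp add: gauss_binom_eq_0)
  have low: "gauss_binom c (Suc n) i
      = gauss_binom c n i + fps_X ^ (c * nat (int n + 1 - j)) * gauss_binom_int c n (j - 1)"
  proof (cases i)
    case (Suc i')
    then have "gauss_binom_int c n (j - 1) = gauss_binom c n i'" and "nat (int n + 1 - j) = n - i'"
      using j by (auto simp: gauss_binom_int_def)
    then show ?thesis
      using gauss_binom_Suc_Suc'[OF assms, of n i'] Suc by (simp add: add.commute)
  qed (simp add: j gauss_binom_int_def)
  have "gauss_binom_int c (n + 2) (j + 1) = gauss_binom c (Suc n) i
      + fps_X ^ (c * Suc i) * (fps_X ^ (c * (n - i)) * gauss_binom c n i + gauss_binom c n (Suc i))"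
    using gauss_binom_Suc_Suc'[OF assms, of n i] by (simp add: j gauss_binom_int_def nat_add_distrib)
  also have "\<dots> = (1 + fps_X ^ (c * (n + 1))) * gauss_binom_int c n j
      + fps_X ^ (c * nat (int n + 1 - j)) * gauss_binom_int c n (j - 1)
      + fps_X ^ (c * nat (j + 1)) * gauss_binom_int c n (j + 1)"
    unfolding low distrib_left shift
    by (simp add: j gauss_binom_int_def nat_add_distrib algebra_simps)
  finally show ?thesis .
next
  case True
  then show ?thesis
    by (cases "j = -1") (auto simp: gauss_binom_int_def)
qed

section \<open>The Jacobi triple product modulo 2, finite form\<close>

definition tri :: "int \<Rightarrow> int" where
  "tri k = k * (k + 1) div 2"

lemma two_tri: "2 * tri k = k * (k + 1)"
  unfolding tri_def by simp

lemma tri_nonneg: "tri k \<ge> 0"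
  unfolding tri_def by (simp add: zero_le_mult_iff, arith)

lemma tri_add_1: "tri (k + 1) = tri k + k + 1"
  using two_tri[of k] two_tri[of "k + 1"] by (simp add: algebra_simps)

lemma tri_add_tri_diff_1: "tri k + tri (k - 1) = k * k"
  using two_tri[of k] two_tri[of "k - 1"] by (simp add: algebra_simps)

text \<open>Jacobi's triple product identity in the form used below:
  \<open>\<Prod>\<^sub>m\<^sub>\<ge>\<^sub>0 (1 + q^(a+m(a+b))) (1 + q^(b+m(a+b))) (1 - q^((m+1)(a+b))) = \<Sum>\<^sub>k\<^sub>\<in>\<^sub>\<int> q^(jtp_exponent a b k)\<close>.\<close>
definition jtp_exponent :: "nat \<Rightarrow> nat \<Rightarrow> int \<Rightarrow> int" where
  "jtp_exponent a b k = int a * tri k + int b * tri (k - 1)"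

lemma jtp_exponent_nonneg: "jtp_exponent a b k \<ge> 0"
  unfolding jtp_exponent_def using tri_nonneg[of k] tri_nonneg[of "k - 1"] by simp

lemma jtp_exponent_add_1: "jtp_exponent a b (k + 1) = jtp_exponent a b k + int a * (k + 1) + int b * k"
  unfolding jtp_exponent_def using tri_add_1[of k] tri_add_1[of "k - 1"] by (simp add: algebra_simps)

lemma abs_le_square_int: "\<bar>k::int\<bar> \<le> k * k"
proof (cases "k = 0")
  case False
  then have "\<bar>k\<bar> * 1 \<le> \<bar>k\<bar> * \<bar>k\<bar>"
    by (intro mult_left_mono) auto
  then show ?thesis
    by (simp flip: abs_mult)
qed simp

lemma jtp_exponent_ge_abs: "a > 0 \<Longrightarrow> b > 0 \<Longrightarrow> \<bar>k\<bar> \<le> jtp_exponent a b k"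
  unfolding jtp_exponent_def
  using abs_le_square_int[of k] tri_add_tri_diff_1[of k] tri_nonneg[of k] tri_nonneg[of "k - 1"]
    mult_right_mono[of 1 "int a" "tri k"] mult_right_mono[of 1 "int b" "tri (k - 1)"]
  by simp

definition jtp_product :: "nat \<Rightarrow> nat \<Rightarrow> nat \<Rightarrow> bit fps" where
  "jtp_product a b N = (\<Prod>m<N. (1 + fps_X ^ (a + m * (a + b))) * (1 + fps_X ^ (b + m * (a + b))))"

definition jtp_term :: "nat \<Rightarrow> nat \<Rightarrow> nat \<Rightarrow> int \<Rightarrow> bit fps" where
  "jtp_term a b N k = gauss_binom_int (a + b) (2 * N) (k + int N) * fps_X ^ nat (jtp_exponent a b k)"

lemma jtp_term_eq_0: "\<bar>k\<bar> > int N \<Longrightarrow> jtp_term a b N k = 0"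
  by (simp add: jtp_term_def gauss_binom_int_eq_0 abs_if split: if_splits)

lemma finite_int_support:
  assumes "\<And>k::int. M < \<bar>k\<bar> \<Longrightarrow> f k = 0"
  shows "finite {k. f k \<noteq> 0}"
proof (rule finite_subset)
  show "{k. f k \<noteq> 0} \<subseteq> {-M..M}"
    using assms by (force simp: abs_le_iff simp flip: not_less)
qed simp

lemma Sum_any_shift_int: "Sum_any (\<lambda>k::int. f (k + d)) = Sum_any f"
  by (rule Sum_any.reindex_cong[of "\<lambda>k. k + d", symmetric])
    (auto simp: bij_def inj_def surj_def intro: exI[of _ "_ - d"])

lemma jtp_term_shift_down:
  "fps_X ^ ((a + b) * nat (int N + 1 - k)) * gauss_binom_int (a + b) (2 * N) (k - 1 + int N)
     * fps_X ^ nat (jtp_exponent a b k)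
   = fps_X ^ (a + N * (a + b)) * jtp_term a b N (k - 1)"
proof (cases "k \<le> int N + 1")
  case True
  define g where "g = gauss_binom_int (a + b) (2 * N) (k - 1 + int N)"
  have "int ((a + b) * nat (int N + 1 - k) + nat (jtp_exponent a b k))
      = int (a + N * (a + b) + nat (jtp_exponent a b (k - 1)))"
    using True jtp_exponent_add_1[of a b "k - 1"] jtp_exponent_nonneg[of a b k] jtp_exponent_nonneg[of a b "k - 1"]
    by (simp add: algebra_simps)
  then have exp: "(a + b) * nat (int N + 1 - k) + nat (jtp_exponent a b k)
      = a + N * (a + b) + nat (jtp_exponent a b (k - 1))"
    by (simp only: of_nat_eq_iff)
  have "fps_X ^ ((a + b) * nat (int N + 1 - k)) * g * fps_X ^ nat (jtp_exponent a b k)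
      = g * fps_X ^ ((a + b) * nat (int N + 1 - k) + nat (jtp_exponent a b k))"
    by (simp only: power_add mult_ac)
  also have "\<dots> = fps_X ^ (a + N * (a + b)) * (g * fps_X ^ nat (jtp_exponent a b (k - 1)))"
    unfolding exp by (simp only: power_add mult_ac)
  finally show ?thesis
    by (simp add: g_def jtp_term_def)
qed (simp add: jtp_term_def gauss_binom_int_eq_0)

lemma jtp_term_shift_up:
  "fps_X ^ ((a + b) * nat (k + int N + 1)) * gauss_binom_int (a + b) (2 * N) (k + 1 + int N)
     * fps_X ^ nat (jtp_exponent a b k)
   = fps_X ^ (b + N * (a + b)) * jtp_term a b N (k + 1)"
proof (cases "k + int N + 1 \<ge> 0")
  case True
  define g where "g = gauss_binom_int (a + b) (2 * N) (k + 1 + int N)"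
  have "int ((a + b) * nat (k + int N + 1) + nat (jtp_exponent a b k))
      = int (b + N * (a + b) + nat (jtp_exponent a b (k + 1)))"
    using True jtp_exponent_add_1[of a b k] jtp_exponent_nonneg[of a b k] jtp_exponent_nonneg[of a b "k + 1"]
    by (simp add: algebra_simps)
  then have exp: "(a + b) * nat (k + int N + 1) + nat (jtp_exponent a b k)
      = b + N * (a + b) + nat (jtp_exponent a b (k + 1))"
    by (simp only: of_nat_eq_iff)
  have "fps_X ^ ((a + b) * nat (k + int N + 1)) * g * fps_X ^ nat (jtp_exponent a b k)
      = g * fps_X ^ ((a + b) * nat (k + int N + 1) + nat (jtp_exponent a b k))"
    by (simp only: power_add mult_ac)
  also have "\<dots> = fps_X ^ (b + N * (a + b)) * (g * fps_X ^ nat (jtp_exponent a b (k + 1)))"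
    unfolding exp by (simp only: power_add mult_ac)
  finally show ?thesis
    by (simp add: g_def jtp_term_def)
qed (simp add: jtp_term_def gauss_binom_int_eq_0)

lemma jtp_term_Suc:
  assumes "a + b > 0"
  shows "jtp_term a b (Suc N) k = (1 + fps_X ^ ((a + b) * (2 * N + 1))) * jtp_term a b N k
    + fps_X ^ (a + N * (a + b)) * jtp_term a b N (k - 1)
    + fps_X ^ (b + N * (a + b)) * jtp_term a b N (k + 1)"
proof -
  define g where "g = gauss_binom_int (a + b) (2 * N)"
  define x where "x = (fps_X ^ nat (jtp_exponent a b k) :: bit fps)"
  have "int (2 * N) + 1 - (k + int N) = int N + 1 - k" "k + int N - 1 = k - 1 + int N"
    "k + int N + 1 = k + 1 + int N" "2 * Suc N = 2 * N + 2" "k + int (Suc N) = k + int N + 1"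
    by simp_all
  then have "jtp_term a b (Suc N) k = ((1 + fps_X ^ ((a + b) * (2 * N + 1))) * g (k + int N)
      + fps_X ^ ((a + b) * nat (int N + 1 - k)) * g (k - 1 + int N)
      + fps_X ^ ((a + b) * nat (k + int N + 1)) * g (k + 1 + int N)) * x"
    using gauss_binom_int_add2[OF assms, of "2 * N" "k + int N"]
    unfolding jtp_term_def g_def x_def by (simp only:)
  also have "\<dots> = (1 + fps_X ^ ((a + b) * (2 * N + 1))) * (g (k + int N) * x)
      + fps_X ^ ((a + b) * nat (int N + 1 - k)) * g (k - 1 + int N) * x
      + fps_X ^ ((a + b) * nat (k + int N + 1)) * g (k + 1 + int N) * x"
    by (simp only: distrib_right mult.assoc)
  finally show ?thesis
    unfolding g_def x_def jtp_term_shift_down jtp_term_shift_up by (simp only: jtp_term_def)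
qed

theorem jtp_product_eq_Sum_any:
  assumes "a + b > 0"
  shows "jtp_product a b N = Sum_any (jtp_term a b N)"
proof (induction N)
  case 0
  have "jtp_term a b 0 = (\<lambda>k. if k = 0 then 1 else 0)"
    by (auto simp: fun_eq_iff jtp_term_def gauss_binom_int_def gauss_binom_eq_0 jtp_exponent_def tri_def)
  then show ?case
    by (simp add: jtp_product_def)
next
  case (Suc N)
  define t where "t = jtp_term a b N"
  define u where "u = (fps_X ^ (a + N * (a + b)) :: bit fps)"
  define v where "v = (fps_X ^ (b + N * (a + b)) :: bit fps)"
  define w where "w = (fps_X ^ ((a + b) * (2 * N + 1)) :: bit fps)"
  have "u * v = w"
    by (simp add: u_def v_def w_def algebra_simps flip: power_add)
  then have uv: "(1 + u) * (1 + v) = (1 + w) + u + v"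
    by (simp add: algebra_simps)
  define A where "A k = (1 + w) * t k" for k
  define B where "B k = u * t (k - 1)" for k
  define C where "C k = v * t (k + 1)" for k
  note fin = finite_int_support[where M = "int N + 1"]
  have fin_t: "finite {k. t k \<noteq> 0}" and fin_A: "finite {k. A k \<noteq> 0}"
    and fin_B: "finite {k. B k \<noteq> 0}" and fin_C: "finite {k. C k \<noteq> 0}"
    and fin_AB: "finite {k. A k + B k \<noteq> 0}"
    by (auto intro!: fin simp: A_def B_def C_def t_def jtp_term_eq_0)
  have scale: "Sum_any t * x = Sum_any (\<lambda>k. x * t (k + d))" for x d
    unfolding Sum_any_left_distrib[OF fin_t] Sum_any_shift_int[of "\<lambda>k. x * t k"] by (simp add: mult.commute)
  have "jtp_product a b (Suc N) = jtp_product a b N * ((1 + u) * (1 + v))"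
    by (simp add: jtp_product_def u_def v_def)
  also have "\<dots> = Sum_any t * (1 + w) + Sum_any t * u + Sum_any t * v"
    unfolding Suc.IH uv t_def by (simp only: distrib_left)
  also have "\<dots> = Sum_any A + Sum_any B + Sum_any C"
    using scale[of _ 0] scale[of _ "- 1"] scale[of _ 1] by (simp add: A_def B_def C_def)
  also have "\<dots> = Sum_any (\<lambda>k. A k + B k + C k)"
    by (simp add: Sum_any.distrib fin_A fin_B fin_C fin_AB)
  also have "\<dots> = Sum_any (jtp_term a b (Suc N))"
    using jtp_term_Suc[OF assms] by (simp add: A_def B_def C_def t_def u_def v_def w_def)
  finally show ?case .
qed

section \<open>Theta-type series modulo 2\<close>

text \<open>The series \<open>\<Sum>\<^sub>x\<^sub>\<in>\<^sub>S q\<^sup>e\<^sup>x\<close> modulo 2: its \<open>n\<close>-th coefficient is the parity of the number of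
  \<open>x \<in> S\<close> with \<open>e x = n\<close>; infinite fibres contribute the junk value 0.\<close>
definition theta_series :: "'a set \<Rightarrow> ('a \<Rightarrow> int) \<Rightarrow> bit fps" where
  "theta_series S e = Abs_fps (\<lambda>n. of_nat (card {x\<in>S. e x = int n}))"

definition finite_sublevels :: "('a \<Rightarrow> int) \<Rightarrow> bool" where
  "finite_sublevels e \<longleftrightarrow> (\<forall>N. finite {x. e x \<le> N})"

lemma theta_series_nth: "theta_series S e $ n = of_nat (card {x\<in>S. e x = int n})"
  by (simp add: theta_series_def)

lemma finite_sublevels_fibre: "finite_sublevels e \<Longrightarrow> finite {x\<in>S. e x = n}"
  unfolding finite_sublevels_def by (rule finite_subset[of _ "{x. e x \<le> n}"]) auto

lemma finite_sublevels_int: "(\<And>k::int. \<bar>k\<bar> \<le> e k) \<Longrightarrow> finite_sublevels e"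
  unfolding finite_sublevels_def
proof
  fix N
  assume e: "\<And>k::int. \<bar>k\<bar> \<le> e k"
  have "{k. e k \<le> N} \<subseteq> {-N..N}"
  proof
    fix k assume "k \<in> {k. e k \<le> N}"
    with e[of k] show "k \<in> {-N..N}"
      by (auto simp: abs_le_iff)
  qed
  then show "finite {k. e k \<le> N}"
    by (rule finite_subset) simp
qed

lemma finite_sublevels_int_pair:
  assumes "\<And>j k::int. \<bar>j\<bar> + \<bar>k\<bar> \<le> e (j, k)"
  shows "finite_sublevels e"
  unfolding finite_sublevels_def
proof
  fix N
  have "{p. e p \<le> N} \<subseteq> {-N..N} \<times> {-N..N}"
  proof (clarify)
    fix j k assume "e (j, k) \<le> N"
    then show "j \<in> {-N..N} \<and> k \<in> {-N..N}"
      using assms[of j k] by auto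
  qed
  then show "finite {p. e p \<le> N}"
    by (rule finite_subset) auto
qed

lemma finite_sublevels_comp_inj: "finite_sublevels e \<Longrightarrow> inj h \<Longrightarrow> finite_sublevels (e \<circ> h)"
  unfolding finite_sublevels_def
proof
  fix N assume "\<forall>N. finite {x. e x \<le> N}" "inj h"
  then have "finite (h -` {x. e x \<le> N})"
    by (intro finite_vimageI) auto
  then show "finite {x. (e \<circ> h) x \<le> N}"
    by (simp add: vimage_def)
qed

lemma theta_series_empty [simp]: "theta_series {} e = 0"
  by (rule fps_ext) (simp add: theta_series_nth)

lemma sum_X_power_eq_theta_series:
  assumes "finite K" "\<And>k. k \<in> K \<Longrightarrow> e k \<ge> 0"
  shows "(\<Sum>k\<in>K. fps_X ^ nat (e k)) = theta_series K e"
proof (rule fps_ext)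
  fix n
  have "(\<Sum>k\<in>K. fps_X ^ nat (e k) :: bit fps) $ n = (\<Sum>k\<in>K. of_bool (e k = int n))"
    unfolding fps_sum_nth using assms(2) by (intro sum.cong) auto
  also have "\<dots> = of_nat (card {k\<in>K. e k = int n})"
    using assms(1) by (simp add: sum.inter_filter[symmetric] Int_def)
  finally show "(\<Sum>k\<in>K. fps_X ^ nat (e k)) $ n = theta_series K e $ n"
    by (simp add: theta_series_nth)
qed

lemma theta_series_eq_upto_sublevel:
  "fps_eq_upto n (theta_series {x\<in>S. e x \<le> int n} e) (theta_series S e)"
  unfolding fps_eq_upto_def theta_series_nth by (auto intro!: arg_cong[where f = "\<lambda>A. of_nat (card A)"])

lemma theta_series_X_mult:
  assumes "\<And>x. x \<in> S \<Longrightarrow> e x \<ge> 0"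
  shows "fps_X * theta_series S e = theta_series S (\<lambda>x. e x + 1)"
proof (rule fps_ext)
  fix n
  show "(fps_X * theta_series S e) $ n = theta_series S (\<lambda>x. e x + 1) $ n"
  proof (cases n)
    case 0
    have empty: "{x\<in>S. e x + 1 = 0} = {}"
      using assms by force
    show ?thesis
      using 0 by (simp add: theta_series_nth empty)
  next
    case (Suc m)
    then have "{x\<in>S. e x + 1 = int n} = {x\<in>S. e x = int m}"
      by auto
    then show ?thesis
      using Suc by (simp add: theta_series_nth)
  qed
qed

lemma theta_series_bij_betw:
  assumes "bij_betw h S T" "\<And>x. x \<in> S \<Longrightarrow> f (h x) = e x"
  shows "theta_series S e = theta_series T f"
proof (rule fps_ext)
  fix n
  have "bij_betw h {x\<in>S. e x = int n} {y\<in>T. f y = int n}"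
    using assms by (auto simp: bij_betw_def inj_on_def)
  then show "theta_series S e $ n = theta_series T f $ n"
    by (simp add: theta_series_nth bij_betw_same_card)
qed

lemma theta_series_Un:
  assumes "S \<inter> T = {}" "finite_sublevels e"
  shows "theta_series (S \<union> T) e = theta_series S e + theta_series T e"
proof (rule fps_ext)
  fix n
  have "{x\<in>S \<union> T. e x = int n} = {x\<in>S. e x = int n} \<union> {x\<in>T. e x = int n}"
    by auto
  moreover have "card ({x\<in>S. e x = int n} \<union> {x\<in>T. e x = int n})
      = card {x\<in>S. e x = int n} + card {x\<in>T. e x = int n}"
    by (rule card_Un_disjoint) (use assms finite_sublevels_fibre in auto)
  ultimately show "theta_series (S \<union> T) e $ n = (theta_series S e + theta_series T e) $ n"
    by (simp add: theta_series_nth)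
qed

text \<open>Modulo 2 the points moved by an \<open>e\<close>-preserving involution cancel in pairs.\<close>
lemma theta_series_involution:
  assumes "finite_sublevels e"
    and "\<And>x. x \<in> S \<Longrightarrow> \<sigma> x \<in> S" "\<And>x. x \<in> S \<Longrightarrow> \<sigma> (\<sigma> x) = x" "\<And>x. x \<in> S \<Longrightarrow> e (\<sigma> x) = e x"
  shows "theta_series S e = theta_series {x\<in>S. \<sigma> x = x} e"
proof (rule fps_ext)
  fix n
  define A where "A = {x\<in>S. e x = int n}"
  have "finite A"
    unfolding A_def using assms(1) by (rule finite_sublevels_fibre)
  have "(of_nat (card A) :: bit) = (\<Sum>x\<in>A. 1)"
    by simp
  also have "\<dots> = (\<Sum>x\<in>{x\<in>A. \<sigma> x = x}. 1)"
    by (rule sum_bit_involution[OF \<open>finite A\<close>]) (use assms in \<open>auto simp: A_def\<close>)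
  also have "{x\<in>A. \<sigma> x = x} = {x\<in>{x\<in>S. \<sigma> x = x}. e x = int n}"
    by (auto simp: A_def)
  finally show "theta_series S e $ n = theta_series {x\<in>S. \<sigma> x = x} e $ n"
    by (simp add: theta_series_nth A_def)
qed

lemma theta_series_mult:
  assumes "finite_sublevels e" "finite_sublevels f" "\<And>x. e x \<ge> 0" "\<And>y. f y \<ge> 0"
  shows "theta_series S e * theta_series T f = theta_series (S \<times> T) (\<lambda>(x, y). e x + f y)"
proof (rule fps_ext)
  fix n
  define A where "A i = {x\<in>S. e x = int i}" for i
  define B where "B i = {y\<in>T. f y = int i}" for i
  have fin: "finite (A i)" "finite (B i)" for i
    unfolding A_def B_def using assms(1,2) by (auto intro: finite_sublevels_fibre)
  have disjoint: "(A i \<times> B (n - i)) \<inter> (A j \<times> B (n - j)) = {}" if "i \<noteq> j" "i \<le> n" "j \<le> n" for i j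
    using that by (auto simp: A_def B_def)
  have fibre: "{p\<in>S \<times> T. (\<lambda>(x, y). e x + f y) p = int n} = (\<Union>i\<in>{0..n}. A i \<times> B (n - i))"
  proof (intro set_eqI iffI)
    fix p assume p: "p \<in> {p\<in>S \<times> T. (\<lambda>(x, y). e x + f y) p = int n}"
    obtain x y where "p = (x, y)"
      by force
    moreover have "e x = int (nat (e x))" "f y = int (n - nat (e x))" "nat (e x) \<le> n"
      using p assms(3)[of x] assms(4)[of y] \<open>p = (x, y)\<close> by auto
    ultimately show "p \<in> (\<Union>i\<in>{0..n}. A i \<times> B (n - i))"
      using p by (auto simp: A_def B_def intro!: bexI[of _ "nat (e x)"])
  qed (auto simp: A_def B_def)
  have "(theta_series S e * theta_series T f) $ n = (\<Sum>i=0..n. of_nat (card (A i)) * of_nat (card (B (n - i))))"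
    by (simp add: fps_mult_nth theta_series_nth A_def B_def)
  also have "\<dots> = of_nat (\<Sum>i=0..n. card (A i \<times> B (n - i)))"
    by (simp add: card_cartesian_product)
  also have "(\<Sum>i=0..n. card (A i \<times> B (n - i))) = card (\<Union>i\<in>{0..n}. A i \<times> B (n - i))"
    by (rule card_UN_disjoint[symmetric]) (auto simp: fin disjoint)
  finally show "(theta_series S e * theta_series T f) $ n
      = theta_series (S \<times> T) (\<lambda>(x, y). e x + f y) $ n"
    by (simp add: theta_series_nth fibre)
qed

section \<open>The Jacobi triple product modulo 2\<close>

lemma gauss_binom_mult_eta_part_eq_upto:
  assumes "c > 0" "j \<le> M" "n \<le> j" "n \<le> M - j"
  shows "fps_eq_upto n (gauss_binom c M j * eta_part c n) 1"
proof -
  define W where "W = eta_part c n"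
  have W: "fps_eq_upto n (eta_part c m) W" if "n \<le> m" for m
    unfolding W_def using assms(1) that by (rule eta_part_eq_upto)
  have "fps_eq_upto n (eta_part c M) (gauss_binom c M j * W * W)"
    unfolding gauss_binom_mult_eta_part[OF assms(2), symmetric]
    by (intro fps_eq_upto_mult fps_eq_upto_refl W assms(3,4))
  then have "fps_eq_upto n (gauss_binom c M j * W * W) (eta_part c M)"
    by (rule fps_eq_upto_sym)
  also have "fps_eq_upto n (eta_part c M) (1 * W)"
    using W[of M] assms by simp
  finally have "fps_eq_upto n (gauss_binom c M j * W) 1"
    by (rule fps_eq_upto_cancel) (use assms(1) in \<open>simp add: W_def\<close>)
  then show ?thesis
    by (simp add: W_def)
qed

lemma jtp_term_mult_eta_part_eq_upto:
  assumes "a > 0" "b > 0" "2 * n \<le> N"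
  shows "fps_eq_upto n (jtp_term a b N k * eta_part (a + b) N)
    (if jtp_exponent a b k \<le> int n then fps_X ^ nat (jtp_exponent a b k) else 0)"
proof (cases "jtp_exponent a b k \<le> int n")
  case True
  define G where "G = gauss_binom (a + b) (2 * N)"
  have k: "- int n \<le> k" "k \<le> int n"
    using jtp_exponent_ge_abs[OF assms(1,2), of k] True unfolding abs_le_iff by linarith+
  then have "k + int N \<ge> 0"
    using assms(3) by linarith
  then obtain j where kj: "k + int N = int j"
    by (metis nonneg_int_cases)
  with k assms(3) have j: "j \<le> 2 * N" "n \<le> j" "n \<le> 2 * N - j"
    by linarith+
  have "fps_eq_upto n (G j * eta_part (a + b) N) (G j * eta_part (a + b) n)"
    using assms by (intro fps_eq_upto_mult fps_eq_upto_refl eta_part_eq_upto) auto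
  also have "fps_eq_upto n \<dots> 1"
    unfolding G_def using assms j by (intro gauss_binom_mult_eta_part_eq_upto) auto
  finally have "fps_eq_upto n (G j * eta_part (a + b) N * fps_X ^ nat (jtp_exponent a b k))
      (1 * fps_X ^ nat (jtp_exponent a b k))"
    by (rule fps_eq_upto_mult) simp
  moreover have "jtp_term a b N k * eta_part (a + b) N = G j * eta_part (a + b) N * fps_X ^ nat (jtp_exponent a b k)"
    using kj by (simp add: jtp_term_def gauss_binom_int_def G_def ac_simps)
  ultimately show ?thesis
    by (simp only: if_P[OF True] mult_1_left)
next
  case False
  then have "n < nat (jtp_exponent a b k)"
    by simp
  moreover have "jtp_term a b N k * eta_part (a + b) N
      = fps_X ^ nat (jtp_exponent a b k) * (gauss_binom_int (a + b) (2 * N) (k + int N) * eta_part (a + b) N)"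
    by (simp add: jtp_term_def ac_simps)
  ultimately show ?thesis
    by (simp only: if_not_P[OF False] fps_eq_upto_X_power_mult_0)
qed

lemma jtp_product_mult_eq_sum:
  assumes "a + b > 0"
  shows "jtp_product a b N * W = (\<Sum>k\<in>{- int N..int N}. jtp_term a b N k * W)"
proof -
  have "jtp_product a b N * W = Sum_any (\<lambda>k. jtp_term a b N k * W)"
    unfolding jtp_product_eq_Sum_any[OF assms]
    by (rule Sum_any_left_distrib, rule finite_int_support) (rule jtp_term_eq_0)
  also have "\<dots> = (\<Sum>k\<in>{- int N..int N}. jtp_term a b N k * W)"
  proof (rule Sum_any.expand_superset)
    show "{k. jtp_term a b N k * W \<noteq> 0} \<subseteq> {- int N..int N}"
      using jtp_term_eq_0[of N _ a b] by (force simp: abs_le_iff simp flip: not_less)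
  qed simp
  finally show ?thesis .
qed

theorem jtp_product_eq_upto_theta_series:
  assumes "a > 0" "b > 0" "2 * n \<le> N"
  shows "fps_eq_upto n (jtp_product a b N * eta_part (a + b) N) (theta_series UNIV (jtp_exponent a b))"
proof -
  define e where "e = jtp_exponent a b"
  have "- int N \<le> k \<and> k \<le> int N" if "e k \<le> int n" for k
    using jtp_exponent_ge_abs[OF assms(1,2), of k] that assms(3) unfolding e_def abs_le_iff by linarith
  then have low: "{k\<in>{- int N..int N}. e k \<le> int n} = {k\<in>UNIV. e k \<le> int n}"
    by auto
  have "jtp_product a b N * eta_part (a + b) N = (\<Sum>k\<in>{- int N..int N}. jtp_term a b N k * eta_part (a + b) N)"
    using assms by (intro jtp_product_mult_eq_sum) simp
  also have "fps_eq_upto n \<dots> (\<Sum>k\<in>{- int N..int N}. if e k \<le> int n then fps_X ^ nat (e k) else 0)"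
    unfolding e_def using assms by (intro fps_eq_upto_sum jtp_term_mult_eta_part_eq_upto) simp_all
  also have "\<dots> = (\<Sum>k\<in>{k\<in>UNIV. e k \<le> int n}. fps_X ^ nat (e k))"
    by (simp only: sum.inter_filter[symmetric] finite_atLeastAtMost_int low)
  also have "\<dots> = theta_series {k\<in>UNIV. e k \<le> int n} e"
  proof (rule sum_X_power_eq_theta_series)
    show "finite {k\<in>UNIV. e k \<le> int n}"
      unfolding low[symmetric] by (rule finite_subset[OF _ finite_atLeastAtMost_int]) auto
  qed (simp add: e_def jtp_exponent_nonneg)
  also have "fps_eq_upto n \<dots> (theta_series UNIV e)"
    by (rule theta_series_eq_upto_sublevel)
  finally show ?thesis
    by (simp add: e_def)
qed

lemma jtp_product_Suc:
  "jtp_product a b (Suc N) = jtp_product a b N * ((1 + fps_X ^ (a + N * (a + b))) * (1 + fps_X ^ (b + N * (a + b))))"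
  by (simp add: jtp_product_def)

lemma jtp_product_2_1_mult_eta_part: "jtp_product (2 * d) d N * eta_part (2 * d + d) N = eta_part d (3 * N)"
proof (induction N)
  case (Suc N)
  have exps: "2 * d + N * (2 * d + d) = d * Suc (Suc (3 * N))" "d + N * (2 * d + d) = d * Suc (3 * N)"
    "(2 * d + d) * Suc N = d * Suc (Suc (Suc (3 * N)))" "3 * Suc N = Suc (Suc (Suc (3 * N)))"
    by (simp_all add: algebra_simps)
  have "jtp_product (2 * d) d (Suc N) * eta_part (2 * d + d) (Suc N)
      = (jtp_product (2 * d) d N * eta_part (2 * d + d) N)
        * ((1 + fps_X ^ (2 * d + N * (2 * d + d))) * (1 + fps_X ^ (d + N * (2 * d + d)))
          * (1 + fps_X ^ ((2 * d + d) * Suc N)))"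
    by (simp only: jtp_product_Suc eta_part_Suc mult_ac)
  also have "\<dots> = eta_part d (3 * N) * ((1 + fps_X ^ (d * Suc (Suc (3 * N))))
      * (1 + fps_X ^ (d * Suc (3 * N))) * (1 + fps_X ^ (d * Suc (Suc (Suc (3 * N))))))"
    by (simp only: exps Suc.IH)
  also have "\<dots> = eta_part d (3 * Suc N)"
    unfolding exps(4) by (simp only: eta_part_Suc mult_ac)
  finally show ?case .
qed (simp add: jtp_product_def)

lemma jtp_product_3_1_mult_eta_part: "jtp_product (3 * d) d N * eta_part (2 * d) (2 * N) = eta_part d (4 * N)"
proof (induction N)
  case (Suc N)
  have exps: "3 * d + N * (3 * d + d) = d * Suc (Suc (Suc (4 * N)))" "d + N * (3 * d + d) = d * Suc (4 * N)"
    "2 * d * Suc (2 * N) = d * Suc (Suc (4 * N))" "2 * d * Suc (Suc (2 * N)) = d * Suc (Suc (Suc (Suc (4 * N))))"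
    "2 * Suc N = Suc (Suc (2 * N))" "4 * Suc N = Suc (Suc (Suc (Suc (4 * N))))"
    by (simp_all add: algebra_simps)
  have "jtp_product (3 * d) d (Suc N) * eta_part (2 * d) (2 * Suc N)
      = (jtp_product (3 * d) d N * eta_part (2 * d) (2 * N))
        * ((1 + fps_X ^ (3 * d + N * (3 * d + d))) * (1 + fps_X ^ (d + N * (3 * d + d)))
          * (1 + fps_X ^ (2 * d * Suc (2 * N))) * (1 + fps_X ^ (2 * d * Suc (Suc (2 * N)))))"
    unfolding exps(5) by (simp only: jtp_product_Suc eta_part_Suc mult_ac)
  also have "\<dots> = eta_part d (4 * N) * ((1 + fps_X ^ (d * Suc (Suc (Suc (4 * N)))))
      * (1 + fps_X ^ (d * Suc (4 * N))) * (1 + fps_X ^ (d * Suc (Suc (4 * N))))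
      * (1 + fps_X ^ (d * Suc (Suc (Suc (Suc (4 * N)))))))"
    by (simp only: exps(1-4) Suc.IH)
  also have "\<dots> = eta_part d (4 * Suc N)"
    unfolding exps(6) by (simp only: eta_part_Suc mult_ac)
  finally show ?case .
qed (simp add: jtp_product_def)

theorem eta_mod2_eq_theta_series:
  assumes "d > 0"
  shows "eta_mod2 d = theta_series UNIV (jtp_exponent (2 * d) d)"
proof (rule fps_eq_if_eq_upto)
  fix n :: nat
  have "fps_eq_upto n (eta_mod2 d) (eta_part d (3 * (2 * n)))"
    using assms by (intro eta_mod2_eq_upto) auto
  also have "eta_part d (3 * (2 * n)) = jtp_product (2 * d) d (2 * n) * eta_part (2 * d + d) (2 * n)"
    by (rule jtp_product_2_1_mult_eta_part[symmetric])
  also have "fps_eq_upto n \<dots> (theta_series UNIV (jtp_exponent (2 * d) d))"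
    using jtp_product_eq_upto_theta_series[of "2 * d" d n "2 * n"] assms by simp
  finally show "fps_eq_upto n (eta_mod2 d) (theta_series UNIV (jtp_exponent (2 * d) d))" .
qed

theorem eta_mod2_cube_eq_theta_series:
  assumes "d > 0"
  shows "eta_mod2 d ^ 3 = theta_series UNIV (jtp_exponent (3 * d) d)"
proof (rule fps_eq_if_eq_upto)
  fix n :: nat
  define N where "N = 2 * n"
  define \<Theta> where "\<Theta> = theta_series UNIV (jtp_exponent (3 * d) d)"
  define P where "P = eta_mod2 d"
  have "fps_eq_upto n (\<Theta> * P ^ 2) (jtp_product (3 * d) d N * eta_part (4 * d) N * eta_part (2 * d) (2 * N))"
  proof (rule fps_eq_upto_mult)
    show "fps_eq_upto n \<Theta> (jtp_product (3 * d) d N * eta_part (4 * d) N)"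
      using jtp_product_eq_upto_theta_series[of "3 * d" d n N] assms
      by (simp add: \<Theta>_def N_def fps_eq_upto_sym)
    show "fps_eq_upto n (P ^ 2) (eta_part (2 * d) (2 * N))"
      using assms eta_mod2_eq_upto[of "2 * d" n "2 * N"] by (simp add: P_def N_def flip: eta_mod2_double)
  qed
  also have "jtp_product (3 * d) d N * eta_part (4 * d) N * eta_part (2 * d) (2 * N)
      = eta_part d (4 * N) * eta_part (4 * d) N"
    by (subst jtp_product_3_1_mult_eta_part[symmetric]) (simp only: mult_ac)
  also have "fps_eq_upto n \<dots> (P * eta_mod2 (4 * d))"
    unfolding P_def N_def using assms
    by (intro fps_eq_upto_mult fps_eq_upto_sym[OF eta_mod2_eq_upto]) auto
  also have "P * eta_mod2 (4 * d) = P ^ 3 * P ^ 2"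
    using assms eta_mod2_power2_mult[of d 2] by (simp add: P_def flip: power_Suc power_add)
  finally have "fps_eq_upto n (\<Theta> * P ^ 2) (P ^ 3 * P ^ 2)" .
  then have "fps_eq_upto n \<Theta> (P ^ 3)"
    by (rule fps_eq_upto_cancel) (use assms in \<open>simp add: P_def fps_power_zeroth\<close>)
  then show "fps_eq_upto n (P ^ 3) \<Theta>"
    by (rule fps_eq_upto_sym)
qed

section \<open>A Schroeter-type identity for \<open>\<psi>\<close> modulo 2\<close>

text \<open>\<open>\<psi>(q^d) = \<Sum>\<^sub>n\<^sub>\<ge>\<^sub>0 q^(d n(n+1)/2)\<close> modulo 2; the triangular numbers are indexed by
  \<open>k \<in> \<int>\<close> via \<open>n = 2k\<close> for \<open>k \<ge> 0\<close> and \<open>n = -2k - 1\<close> for \<open>k < 0\<close>.\<close>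
definition psi_series :: "nat \<Rightarrow> bit fps" where
  "psi_series d = theta_series UNIV (\<lambda>k::int. int d * (2 * k * k + k))"

lemma abs_le_two_square_add: "\<bar>k::int\<bar> \<le> 2 * k * k + k"
  using abs_le_square_int[of k] by (simp add: abs_if algebra_simps split: if_splits)

lemma two_square_add_nonneg: "0 \<le> 2 * (k::int) * k + k"
  using abs_le_two_square_add[of k] by linarith

lemma eta_mod2_cube_eq_psi_series:
  assumes "d > 0"
  shows "eta_mod2 d ^ 3 = psi_series d"
proof -
  have "2 * jtp_exponent (3 * d) d k = 2 * (int d * (2 * k * k + k))" for k
    unfolding jtp_exponent_def distrib_left mult.left_commute[of 2] two_tri by (simp add: algebra_simps)
  then have "jtp_exponent (3 * d) d = (\<lambda>k. int d * (2 * k * k + k))"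
    by auto
  then show ?thesis
    using assms by (simp add: eta_mod2_cube_eq_theta_series psi_series_def)
qed

definition schroeter_form :: "int \<times> int \<Rightarrow> int" where
  "schroeter_form = (\<lambda>(j, k). (2 * j * j + j) + 3 * (2 * k * k + k))"

lemma finite_sublevels_schroeter_form: "finite_sublevels schroeter_form"
proof (rule finite_sublevels_int_pair)
  fix j k :: int
  show "\<bar>j\<bar> + \<bar>k\<bar> \<le> schroeter_form (j, k)"
    using abs_le_two_square_add[of j] abs_le_two_square_add[of k] two_square_add_nonneg[of k]
    by (simp add: schroeter_form_def)
qed

lemma psi_series_1_mult_3: "psi_series 1 * psi_series 3 = theta_series UNIV schroeter_form"
proof -
  have fs: "finite_sublevels (\<lambda>k::int. int d * (2 * k * k + k))" if "d > 0" for d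
  proof (rule finite_sublevels_int)
    fix k :: int
    show "\<bar>k\<bar> \<le> int d * (2 * k * k + k)"
      using abs_le_two_square_add[of k] two_square_add_nonneg[of k] that
        mult_right_mono[of 1 "int d" "2 * k * k + k"] by simp
  qed
  have "psi_series 1 * psi_series 3 = theta_series (UNIV \<times> UNIV)
      (\<lambda>(x, y). int 1 * (2 * x * x + x) + int 3 * (2 * y * y + y))"
    unfolding psi_series_def
    by (intro theta_series_mult fs mult_nonneg_nonneg two_square_add_nonneg of_nat_0_le_iff) simp_all
  then show ?thesis
    by (simp add: schroeter_form_def)
qed

text \<open>The substitution \<open>(j, k) = (s + 3t + c, s - t - d)\<close> parametrises the pairs with
  \<open>j - k \<equiv> c + d (mod 4)\<close>.\<close>
definition schroeter_param :: "int \<Rightarrow> int \<Rightarrow> int \<times> int \<Rightarrow> int \<times> int" where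
  "schroeter_param c d = (\<lambda>(s, t). (s + 3 * t + c, s - t - d))"

definition residue_class_diff :: "int \<Rightarrow> (int \<times> int) set" where
  "residue_class_diff r = {(j, k). (j - k) mod 4 = r}"

lemma bij_betw_schroeter_param:
  assumes "0 \<le> c + d" "c + d < 4"
  shows "bij_betw (schroeter_param c d) UNIV (residue_class_diff (c + d))"
proof (rule bij_betw_byWitness[where f' = "\<lambda>(j, k). (k + (j - k) div 4 + d, (j - k) div 4)"])
  have div: "(4 * t + (c + d)) div 4 = t" "(4 * t + (c + d)) mod 4 = c + d" for t :: int
    using assms by simp_all
  have diff: "(s + 3 * t + c) - (s - t - d) = 4 * t + (c + d)" for s t :: int
    by simp
  show "\<forall>p\<in>UNIV. (\<lambda>(j, k). (k + (j - k) div 4 + d, (j - k) div 4)) (schroeter_param c d p) = p"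
    by (auto simp: schroeter_param_def diff div)
  show "schroeter_param c d ` UNIV \<subseteq> residue_class_diff (c + d)"
    using assms by (auto simp: schroeter_param_def residue_class_diff_def diff)
  show "\<forall>p\<in>residue_class_diff (c + d). schroeter_param c d ((\<lambda>(j, k). (k + (j - k) div 4 + d, (j - k) div 4)) p) = p"
  proof
    fix p
    assume "p \<in> residue_class_diff (c + d)"
    then obtain j k where p: "p = (j, k)" "(j - k) mod 4 = c + d"
      by (auto simp: residue_class_diff_def)
    then have "j - k = 4 * ((j - k) div 4) + (c + d)"
      by (metis div_mult_mod_eq mult.commute)
    then show "schroeter_param c d ((\<lambda>(j, k). (k + (j - k) div 4 + d, (j - k) div 4)) p) = p"
      using p by (simp add: schroeter_param_def)
  qed
qed simp

lemma theta_series_residue_class: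
  assumes "0 \<le> c + d" "c + d < 4" "\<And>p. \<sigma> (\<sigma> p) = p"
    and "\<And>p. schroeter_form (schroeter_param c d (\<sigma> p)) = schroeter_form (schroeter_param c d p)"
  shows "theta_series (residue_class_diff (c + d)) schroeter_form
    = theta_series {p. \<sigma> p = p} (schroeter_form \<circ> schroeter_param c d)"
proof -
  have bij: "bij_betw (schroeter_param c d) UNIV (residue_class_diff (c + d))"
    using assms(1,2) by (rule bij_betw_schroeter_param)
  then have "theta_series (residue_class_diff (c + d)) schroeter_form
      = theta_series UNIV (schroeter_form \<circ> schroeter_param c d)"
    by (intro theta_series_bij_betw[symmetric]) simp_all
  also have "\<dots> = theta_series {p\<in>UNIV. \<sigma> p = p} (schroeter_form \<circ> schroeter_param c d)"
    using bij assms(3,4)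
    by (intro theta_series_involution finite_sublevels_comp_inj finite_sublevels_schroeter_form)
      (auto simp: bij_betw_def)
  finally show ?thesis
    by simp
qed

lemma theta_series_residue_class_0: "theta_series (residue_class_diff 0) schroeter_form = psi_series 4"
proof -
  have "theta_series (residue_class_diff (0 + 0)) schroeter_form
      = theta_series {p. (\<lambda>(s, t). (s, - t)) p = p} (schroeter_form \<circ> schroeter_param 0 0)"
    by (rule theta_series_residue_class) (auto simp: schroeter_form_def schroeter_param_def algebra_simps)
  also have "\<dots> = psi_series 4"
    unfolding psi_series_def
    by (rule theta_series_bij_betw[where h = "\<lambda>s. (s, 0)", symmetric])
      (auto simp: bij_betw_def inj_def image_def schroeter_form_def schroeter_param_def algebra_simps)
  finally show ?thesis
    by simp
qed

lemma theta_series_residue_class_1: "theta_series (residue_class_diff 1) schroeter_form = 0"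
proof -
  have "theta_series (residue_class_diff (1 + 0)) schroeter_form
      = theta_series {p. (\<lambda>(s, t). (- 1 - s, t)) p = p} (schroeter_form \<circ> schroeter_param 1 0)"
    by (rule theta_series_residue_class) (auto simp: schroeter_form_def schroeter_param_def algebra_simps)
  also have "{p :: int \<times> int. (\<lambda>(s, t). (- 1 - s, t)) p = p} = {}"
    by auto presburger
  finally show ?thesis
    by simp
qed

lemma theta_series_residue_class_2: "theta_series (residue_class_diff 2) schroeter_form = 0"
proof -
  have "theta_series (residue_class_diff (2 + 0)) schroeter_form
      = theta_series {p. (\<lambda>(s, t). (s, - 1 - t)) p = p} (schroeter_form \<circ> schroeter_param 2 0)"
    by (rule theta_series_residue_class) (auto simp: schroeter_form_def schroeter_param_def algebra_simps)
  also have "{p :: int \<times> int. (\<lambda>(s, t). (s, - 1 - t)) p = p} = {}"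
    by auto presburger
  finally show ?thesis
    by simp
qed

lemma theta_series_residue_class_3: "theta_series (residue_class_diff 3) schroeter_form = fps_X * psi_series 12"
proof -
  have "theta_series (residue_class_diff (2 + 1)) schroeter_form
      = theta_series {p. (\<lambda>(s, t). (- s, t)) p = p} (schroeter_form \<circ> schroeter_param 2 1)"
    by (rule theta_series_residue_class) (auto simp: schroeter_form_def schroeter_param_def algebra_simps)
  also have "\<dots> = theta_series UNIV (\<lambda>t. int 12 * (2 * t * t + t) + 1)"
    by (rule theta_series_bij_betw[where h = "\<lambda>t. (0, - t - 1)", symmetric])
      (auto simp: bij_betw_def inj_def image_def schroeter_form_def schroeter_param_def algebra_simps
        intro!: exI[of _ "- _ - 1"])
  also have "\<dots> = fps_X * psi_series 12"
    unfolding psi_series_def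
    by (rule theta_series_X_mult[symmetric]) (intro mult_nonneg_nonneg two_square_add_nonneg of_nat_0_le_iff)
  finally show ?thesis
    by simp
qed

theorem psi_series_schroeter: "psi_series 1 * psi_series 3 = psi_series 4 + fps_X * psi_series 12"
proof -
  have classes: "UNIV = residue_class_diff 0 \<union> (residue_class_diff 1 \<union> (residue_class_diff 2 \<union> residue_class_diff 3))"
    by (auto simp: residue_class_diff_def)
  have "psi_series 1 * psi_series 3 = theta_series UNIV schroeter_form"
    by (rule psi_series_1_mult_3)
  also have "\<dots> = theta_series (residue_class_diff 0) schroeter_form + (theta_series (residue_class_diff 1) schroeter_form
      + (theta_series (residue_class_diff 2) schroeter_form + theta_series (residue_class_diff 3) schroeter_form))"
    unfolding classes
    by (simp add: theta_series_Un finite_sublevels_schroeter_form residue_class_diff_def disjoint_iff)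
  also have "\<dots> = psi_series 4 + fps_X * psi_series 12"
    by (simp add: theta_series_residue_class_0 theta_series_residue_class_1 theta_series_residue_class_2
        theta_series_residue_class_3)
  finally show ?thesis .
qed

section \<open>Even parts of power series\<close>

definition fps_even_part :: "'a fps \<Rightarrow> 'a fps" where
  "fps_even_part F = Abs_fps (\<lambda>n. F $ (2 * n))"

lemma fps_even_part_nth [simp]: "fps_even_part F $ n = F $ (2 * n)"
  by (simp add: fps_even_part_def)

lemma fps_even_part_add: "fps_even_part (F + G) = fps_even_part F + fps_even_part (G :: 'a::monoid_add fps)"
  by (rule fps_ext) simp

lemma fps_even_part_one [simp]: "fps_even_part (1 :: 'a::comm_semiring_1 fps) = 1"
  by (rule fps_ext) simp

lemma fps_even_part_X_mult_square: "fps_even_part (fps_X * (G :: bit fps)^2) = 0"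
proof (rule fps_ext)
  fix n
  show "fps_even_part (fps_X * G^2) $ n = 0 $ n"
  proof (cases n)
    case (Suc m)
    then have "2 * n = Suc (2 * m + 1)"
      by simp
    then show ?thesis
      by (simp add: fps_bit_square_nth)
  qed simp
qed

lemma fps_even_part_mult_square: "fps_even_part (F * (G :: bit fps)^2) = fps_even_part F * G"
proof (rule fps_ext)
  fix n
  have "fps_even_part (F * G^2) $ n = (\<Sum>i\<in>{0..2 * n}. F $ i * (G^2) $ (2 * n - i))"
    by (simp add: fps_mult_nth)
  also have "\<dots> = (\<Sum>i\<in>(\<lambda>j. 2 * j) ` {0..n}. F $ i * (G^2) $ (2 * n - i))"
  proof (rule sum.mono_neutral_right)
    show "\<forall>i\<in>{0..2 * n} - (\<lambda>j. 2 * j) ` {0..n}. F $ i * (G^2) $ (2 * n - i) = 0"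
      by (auto simp: fps_bit_square_nth elim!: evenE)
  qed auto
  also have "\<dots> = (\<Sum>j\<in>{0..n}. F $ (2 * j) * G $ (n - j))"
    by (subst sum.reindex) (auto simp: inj_on_def fps_bit_square_nth simp flip: diff_mult_distrib2)
  also have "\<dots> = (fps_even_part F * G) $ n"
    by (simp add: fps_mult_nth)
  finally show "fps_even_part (F * G^2) $ n = (fps_even_part F * G) $ n" .
qed

section \<open>Squares prime to 3\<close>

definition zero_or_square_coprime3 :: "nat \<Rightarrow> bool" where
  "zero_or_square_coprime3 n \<longleftrightarrow> n = 0 \<or> (\<exists>m::nat. n = m ^ 2) \<and> \<not> 3 dvd n"

definition zero_or_square_coprime3_series :: "bit fps" where
  "zero_or_square_coprime3_series = Abs_fps (\<lambda>n. of_bool (zero_or_square_coprime3 n))"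

lemma three_dvd_square_iff: "3 dvd (m::nat)^2 \<longleftrightarrow> 3 dvd m"
  by (rule prime_dvd_power_iff) simp_all

lemma zero_or_square_coprime3_square: "zero_or_square_coprime3 (m^2) \<longleftrightarrow> m = 0 \<or> \<not> 3 dvd m"
  by (auto simp: zero_or_square_coprime3_def three_dvd_square_iff)

lemma four_dvd_square_iff: "4 dvd (m::nat)^2 \<longleftrightarrow> even m"
proof
  assume "4 dvd m^2"
  then have "even (m^2)"
    by (rule dvd_trans[rotated]) simp
  then show "even m"
    by simp
qed (auto simp: power_mult_distrib elim!: evenE)

lemma zero_or_square_coprime3_square_div_4:
  assumes "even m"
  shows "zero_or_square_coprime3 (m^2 div 4) \<longleftrightarrow> m = 0 \<or> \<not> 3 dvd m"
proof -
  obtain l where "m = 2 * l"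
    using assms by (elim evenE)
  moreover have "3 dvd 2 * l \<longleftrightarrow> 3 dvd l"
    by presburger
  ultimately show ?thesis
    by (simp add: power_mult_distrib zero_or_square_coprime3_square)
qed

lemma zero_or_square_coprime3_add_quarter:
  "of_bool (zero_or_square_coprime3 n) + of_bool (4 dvd n \<and> zero_or_square_coprime3 (n div 4))
    = (of_bool (\<exists>m. n = m^2 \<and> odd m \<and> \<not> 3 dvd m) :: bit)"
proof (cases "\<exists>m. n = m^2")
  case True
  then obtain m where n: "n = m^2"
    by blast
  have "(\<exists>m'. n = m'^2 \<and> odd m' \<and> \<not> 3 dvd m') \<longleftrightarrow> odd m \<and> \<not> 3 dvd m"
    by (auto simp: n power2_eq_iff_nonneg)
  then show ?thesis
    unfolding n by (cases "even m") (simp_all add: four_dvd_square_iff zero_or_square_coprime3_square_div_4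
        zero_or_square_coprime3_square odd_pos)
next
  case False
  moreover have "\<not> (4 dvd n \<and> zero_or_square_coprime3 (n div 4))"
  proof
    assume "4 dvd n \<and> zero_or_square_coprime3 (n div 4)"
    then obtain l where "n div 4 = l^2" "4 dvd n"
      by (auto simp: zero_or_square_coprime3_def)
    then have "n = (2 * l)^2"
      by (auto simp: power_mult_distrib)
    with False show False
      by blast
  qed
  moreover have "n \<noteq> 0"
    using False by (metis zero_power2)
  ultimately show ?thesis
    by (auto simp: zero_or_square_coprime3_def)
qed

lemma three_dvd_int_iff: "3 dvd int m \<longleftrightarrow> 3 dvd m"
  by (metis int_dvd_int_iff of_nat_numeral)

lemma inj_square_6k_add_1: "inj (\<lambda>k::int. (6 * k + 1)^2)"
proof (rule injI)
  fix k l :: int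
  assume "(6 * k + 1)^2 = (6 * l + 1)^2"
  then have "6 * k + 1 = 6 * l + 1 \<or> 6 * k + 1 = - (6 * l + 1)"
    by (simp only: power2_eq_iff)
  then show "k = l"
    by presburger
qed

lemma range_square_6k_add_1:
  "int n \<in> range (\<lambda>k::int. (6 * k + 1)^2) \<longleftrightarrow> (\<exists>m. n = m^2 \<and> odd m \<and> \<not> 3 dvd m)"
proof
  assume "int n \<in> range (\<lambda>k::int. (6 * k + 1)^2)"
  then obtain k where k: "int n = (6 * k + 1)^2"
    by blast
  define m where "m = nat \<bar>6 * k + 1\<bar>"
  have q: "int m = \<bar>6 * k + 1\<bar>"
    by (simp add: m_def)
  then have "int n = int (m^2)"
    using k by simp
  moreover have "odd (int m)" "\<not> 3 dvd int m"
    unfolding q by presburger+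
  ultimately show "\<exists>m. n = m^2 \<and> odd m \<and> \<not> 3 dvd m"
    by (simp only: of_nat_eq_iff even_of_nat_iff three_dvd_int_iff) blast
next
  assume "\<exists>m. n = m^2 \<and> odd m \<and> \<not> 3 dvd m"
  then obtain m where m: "n = m^2" "odd m" "\<not> 3 dvd m"
    by blast
  then have "odd (int m)" "\<not> 3 dvd int m"
    by (simp_all add: three_dvd_int_iff)
  then have "\<exists>k. 6 * k + 1 = int m \<or> 6 * k + 1 = - int m"
    by presburger
  then obtain k where "6 * k + 1 = int m \<or> 6 * k + 1 = - int m"
    by blast
  then have "(6 * k + 1)^2 = (int m)^2"
    by (simp only: power2_eq_iff)
  then have "int n = (6 * k + 1)^2"
    using m(1) by simp
  then show "int n \<in> range (\<lambda>k::int. (6 * k + 1)^2)"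
    by (intro image_eqI[where x = k]) simp_all
qed

lemma card_square_6k_add_1:
  "card {k::int. (6 * k + 1)^2 = int n} = of_bool (\<exists>m. n = m^2 \<and> odd m \<and> \<not> 3 dvd m)"
proof -
  have eq: "{k::int. (6 * k + 1)^2 = int n} = (\<lambda>k. (6 * k + 1)^2) -` {int n}"
    by auto
  show ?thesis
  proof (cases "int n \<in> range (\<lambda>k::int. (6 * k + 1)^2)")
    case True
    then show ?thesis
      unfolding eq using card_vimage_inj[OF inj_square_6k_add_1, of "{int n}"] range_square_6k_add_1[of n]
      by simp
  next
    case False
    then have "(\<lambda>k::int. (6 * k + 1)^2) -` {int n} = {}"
      by (auto simp: image_iff dest: sym)
    then show ?thesis
      unfolding eq using False range_square_6k_add_1[of n] by simp
  qed
qed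

lemma jtp_exponent_48_24: "jtp_exponent 48 24 k + 1 = (6 * k + 1)^2"
  unfolding jtp_exponent_def using two_tri[of k] two_tri[of "k - 1"]
  by (simp add: power2_eq_square algebra_simps)

theorem zero_or_square_coprime3_series_equation:
  "zero_or_square_coprime3_series + zero_or_square_coprime3_series ^ 4 = fps_X * eta_mod2 24"
proof (rule fps_ext)
  fix n
  have "fps_X * eta_mod2 24 = theta_series UNIV (\<lambda>k. jtp_exponent 48 24 k + 1)"
    using eta_mod2_eq_theta_series[of 24] by (simp add: theta_series_X_mult jtp_exponent_nonneg)
  then have "(fps_X * eta_mod2 24) $ n = of_nat (card {k::int. (6 * k + 1)^2 = int n})"
    by (simp add: theta_series_nth jtp_exponent_48_24)
  also have "\<dots> = of_bool (zero_or_square_coprime3 n) + of_bool (4 dvd n \<and> zero_or_square_coprime3 (n div 4))"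
    by (simp only: card_square_6k_add_1 of_nat_of_bool zero_or_square_coprime3_add_quarter)
  also have "\<dots> = (zero_or_square_coprime3_series + zero_or_square_coprime3_series ^ 4) $ n"
    by (simp add: zero_or_square_coprime3_series_def fps_bit_power4_nth)
  finally show "(zero_or_square_coprime3_series + zero_or_square_coprime3_series ^ 4) $ n
      = (fps_X * eta_mod2 24) $ n" ..
qed

section \<open>The generating function modulo 2\<close>

lemma gen_A_mult: "gen_A * (eta_f 2 ^ 2 * eta_f 3) = eta_f 1 * eta_f 6"
proof -
  define D where "D = eta_f 2 ^ 2 * eta_f 3"
  define A where "A = eta_f 1 * eta_f 6 * fps_right_inverse D 1"
  have "D $ 0 = 1"
    by (simp add: D_def eta_f_def fps_power_zeroth)
  then have "D * fps_right_inverse D 1 = 1" and "D \<noteq> 0"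
    by (auto intro: fps_right_inverse)
  have "A * D = eta_f 1 * eta_f 6 * (D * fps_right_inverse D 1)"
    by (simp only: A_def mult_ac)
  also have "\<dots> = eta_f 1 * eta_f 6"
    by (simp add: \<open>D * fps_right_inverse D 1 = 1\<close>)
  finally have A: "A * D = eta_f 1 * eta_f 6" .
  have "gen_A = A"
    unfolding gen_A_def D_def[symmetric]
  proof (rule the_equality)
    fix B
    assume "B * D = eta_f 1 * eta_f 6"
    with A have "B * D = A * D"
      by simp
    with \<open>D \<noteq> 0\<close> show "B = A"
      by simp
  qed (rule A)
  with A show ?thesis
    by (simp add: D_def)
qed

lemma fps_mod2_gen_A_mult: "fps_mod2 gen_A * eta_mod2 1 ^ 3 = eta_mod2 3"
proof -
  define A P1 P3 where "A = fps_mod2 gen_A" and "P1 = eta_mod2 1" and "P3 = eta_mod2 3"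
  have "eta_mod2 2 = P1 ^ 2" "eta_mod2 6 = P3 ^ 2"
    using eta_mod2_double[of 1] eta_mod2_double[of 3] by (simp_all add: P1_def P3_def)
  moreover have "fps_mod2 gen_A * (eta_mod2 2 ^ 2 * eta_mod2 3) = eta_mod2 1 * eta_mod2 6"
    using arg_cong[OF gen_A_mult, of fps_mod2] by (simp only: fps_mod2_mult fps_mod2_power eta_mod2_def)
  ultimately have "A * ((P1 ^ 2) ^ 2 * P3) = P1 * P3 ^ 2"
    by (simp add: A_def P1_def P3_def)
  then have "(A * P1 ^ 3) * (P1 * P3) = P3 * (P1 * P3)"
    by algebra
  moreover have "(P1 * P3) $ 0 = 1"
    by (simp add: P1_def P3_def)
  then have "P1 * P3 \<noteq> 0"
    by auto
  ultimately have "A * P1 ^ 3 = P3"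
    by simp
  then show ?thesis
    by (simp add: A_def P1_def P3_def)
qed

lemma eta_mod2_1_3_cubic: "eta_mod2 1 ^ 3 * eta_mod2 3 ^ 3 = eta_mod2 1 ^ 12 + fps_X * eta_mod2 3 ^ 12"
proof -
  have "eta_mod2 4 = eta_mod2 1 ^ 4" "eta_mod2 12 = eta_mod2 3 ^ 4"
    using eta_mod2_power2_mult[of 1 2] eta_mod2_power2_mult[of 3 2] by simp_all
  then have "psi_series 4 = eta_mod2 1 ^ 12" "psi_series 12 = eta_mod2 3 ^ 12"
    by (simp_all flip: eta_mod2_cube_eq_psi_series power_mult)
  then show ?thesis
    using psi_series_schroeter by (simp add: eta_mod2_cube_eq_psi_series)
qed

lemma fps_mod2_gen_A_cube:
  "fps_mod2 gen_A ^ 3 = 1 + fps_X * (fps_mod2 gen_A * eta_mod2 3 ^ 2) ^ 4"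
proof -
  define A P1 P3 where "A = fps_mod2 gen_A" and "P1 = eta_mod2 1" and "P3 = eta_mod2 3"
  have A: "A * P1 ^ 3 = P3"
    unfolding A_def P1_def P3_def by (rule fps_mod2_gen_A_mult)
  have "A ^ 3 * P3 ^ 4 = A ^ 4 * (P1 ^ 3 * P3 ^ 3)"
    by (simp add: A[symmetric] numeral_eq_Suc algebra_simps)
  also have "\<dots> = (A * P1 ^ 3) ^ 4 + A ^ 4 * (fps_X * P3 ^ 12)"
    unfolding P1_def P3_def eta_mod2_1_3_cubic by (simp add: numeral_eq_Suc algebra_simps)
  also have "\<dots> = (1 + fps_X * (A * P3 ^ 2) ^ 4) * P3 ^ 4"
    unfolding A by (simp add: numeral_eq_Suc algebra_simps)
  finally have "A ^ 3 * P3 ^ 4 = (1 + fps_X * (A * P3 ^ 2) ^ 4) * P3 ^ 4" .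
  moreover have "(P3 ^ 4) $ 0 = 1"
    by (simp add: P3_def fps_power_zeroth)
  then have "P3 ^ 4 \<noteq> 0"
    by auto
  ultimately show ?thesis
    by (simp add: A_def P3_def)
qed

lemma fps_even_part_gen_A_mult: "fps_even_part (fps_mod2 gen_A) * fps_mod2 gen_A = 1"
proof -
  define A where "A = fps_mod2 gen_A"
  have "A ^ 3 = A * A ^ 2"
    by (simp add: numeral_eq_Suc)
  then have "fps_even_part (A ^ 3) = fps_even_part A * A"
    by (simp only: fps_even_part_mult_square)
  moreover have "fps_even_part (A ^ 3) = 1"
  proof -
    have "(A * eta_mod2 3 ^ 2) ^ 4 = ((A * eta_mod2 3 ^ 2) ^ 2) ^ 2"
      by (simp flip: power_mult)
    then show ?thesis
      unfolding A_def fps_mod2_gen_A_cube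
      by (simp only: A_def fps_even_part_add fps_even_part_one fps_even_part_X_mult_square add_0_right)
  qed
  ultimately show ?thesis
    by (simp add: A_def)
qed

theorem fps_even_part_gen_A: "fps_even_part (fps_mod2 gen_A) = zero_or_square_coprime3_series"
proof (rule fps_bit_add_power4_unique)
  define A Y P3 where "A = fps_mod2 gen_A" and "Y = fps_even_part A" and "P3 = eta_mod2 3"
  have YA: "Y * A = 1"
    unfolding Y_def A_def by (rule fps_even_part_gen_A_mult)
  have "Y ^ 4 * A ^ 3 = Y ^ 4 * (1 + fps_X * (A * P3 ^ 2) ^ 4)"
    unfolding A_def P3_def fps_mod2_gen_A_cube ..
  also have "\<dots> = Y ^ 4 + fps_X * (Y * A) ^ 4 * P3 ^ 8"
    by (simp add: numeral_eq_Suc algebra_simps)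
  finally have "Y ^ 4 * A ^ 3 = Y ^ 4 + fps_X * P3 ^ 8"
    by (simp add: YA)
  moreover have "Y ^ 4 * A ^ 3 = Y"
    using YA by (simp add: algebra_simps numeral_eq_Suc)
  ultimately have "Y + Y ^ 4 = (Y ^ 4 + fps_X * P3 ^ 8) + Y ^ 4"
    by simp
  also have "\<dots> = fps_X * eta_mod2 24"
    using eta_mod2_power2_mult[of 3 3] by (simp add: P3_def add.commute[of _ "Y ^ 4"])
  finally show "Y + Y ^ 4 = zero_or_square_coprime3_series + zero_or_square_coprime3_series ^ 4"
    by (simp only: zero_or_square_coprime3_series_equation)
  show "Y $ 0 = zero_or_square_coprime3_series $ 0"
    using arg_cong[OF YA, of "\<lambda>F. F $ 0"]
    by (cases "Y $ 0") (simp_all add: zero_or_square_coprime3_series_def zero_or_square_coprime3_def)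
qed

theorem mainTheorem3:
  fixes n :: nat
  shows "a_coeff (2 * n) mod 2 =
           (if n = 0 \<or> ((\<exists>m::nat. n = m ^ 2) \<and> \<not> (3 dvd n)) then 1 else 0)"
proof -
  have "(of_bool (odd (a_coeff (2 * n))) :: bit) = fps_even_part (fps_mod2 gen_A) $ n"
    by (simp add: a_coeff_def of_int_bit)
  also have "\<dots> = of_bool (zero_or_square_coprime3 n)"
    by (simp add: fps_even_part_gen_A zero_or_square_coprime3_series_def)
  finally have "odd (a_coeff (2 * n)) \<longleftrightarrow> zero_or_square_coprime3 n"
    by (simp only: of_bool_eq_iff)
  then show ?thesis
    by (simp add: zero_or_square_coprime3_def mod_2_eq_odd)
qed

end
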